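(* For any $J\in\mathbb{N}^+$, $h\ge0$ and any lattice points $y_1\neq y_2$ in $\mathbb{Z}^d$, $\mathsf{F}^{y_1}_J\cap\mathsf{F}^{y_2}_J=\emptyset$.
   Context: $\widetilde{\mathbb{Z}}^d$ ($d\ge3$) is the metric graph of $\mathbb{Z}^d$ (each nearest-neighbor edge replaced by a compact interval of length $d$), and $\widetilde{\mathcal{L}}_{1/2}$ is the loop soup on it (Poisson point process of continuous loops with intensity $\frac12\widetilde\mu$, $\widetilde\mu$ the Brownian loop measure of Lupu). A fundamental loop is a loop whose range contains at least two lattice points. Connections $\leftrightarrow$ are via continuous paths in the union of ranges of loops of the soup (or nonempty intersection); $\nleftrightarrow$ is the negation; $\mathbf{C}(x)$ is the cluster of $x$. The ghost field: i.i.d. $\{0,1\}$-valued $\mathscr{G}^h_x$, $x\in\mathbb{Z}^d$, independent of the soup, with $\mathbb{P}(\mathscr{G}^h_x=0)=e^{-h}$; $\mathcal{G}^h=\{x:\mathscr{G}^h_x=1\}$. For $x\in\mathbb{Z}^d$, $i\in\mathbb{N}^+$, $x_i^{\pm}=x\pm(i,0,\dots,0)$, and $A_J^x=\bigcup_{i=1}^J\{x_i^+,x_i^-\}\cup\{x\}$. For $A\subset\mathbb{Z}^d$, $\gamma^{\mathrm f}_A$ is the union of ranges of fundamental loops of $\widetilde{\mathcal{L}}_{1/2}$ that visit every point of $A$ and no other lattice point. For distinct $x,y,z$, $\mathsf{E}(x,y,z)$ is the event that (1) $\mathbf{0}\leftrightarrow x$ and $\mathbf{0}\nleftrightarrow\mathcal{G}^h$;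 (2) $y\leftrightarrow\mathcal{G}^h$ and $z\leftrightarrow\mathcal{G}^h$; (3) $\mathbf{C}(x),\mathbf{C}(y),\mathbf{C}(z)$ are pairwise disjoint. $\mathsf{E}^x_J=\mathsf{E}(x,x_J^-,x_J^+)$. $\mathsf{F}^x_J$ is the event that $\gamma^{\mathrm f}_{A_J^x}\neq\emptyset$ and that, after deleting from $\widetilde{\mathcal{L}}_{1/2}$ all loops composing $\gamma^{\mathrm f}_{A_J^x}$, the event $\mathsf{E}^x_J$ occurs. *)

theory Defs
  imports "HOL-Analysis.Analysis"
begin

text \<open>Points of R^d are represented as functions nat => real vanishing at indices >= d
  (product topology, which on this subspace is the Euclidean one).  Coordinate 0 is the
  first coordinate.  The metric graph of Z^d is realised as the union of the closed unit
  segments between nearest neighbours (edge length is irrelevant for all notions used).\<close>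

type_synonym point = "nat \<Rightarrow> real"
type_synonym loop = "real \<Rightarrow> point"

definition lattice :: "nat \<Rightarrow> point set" where
  "lattice d = {v. (\<forall>i\<ge>d. v i = 0) \<and> (\<forall>i<d. v i \<in> \<int>)}"

definition metric_graph :: "nat \<Rightarrow> point set" where
  "metric_graph d = {v. (\<forall>i\<ge>d. v i = 0) \<and> card {i. i < d \<and> v i \<notin> \<int>} \<le> 1}"

definition origin :: point where
  "origin = (\<lambda>_. 0)"

definition is_loop :: "nat \<Rightarrow> loop \<Rightarrow> bool" where
  "is_loop d l \<longleftrightarrow> path l \<and> pathstart l = pathfinish l \<and> path_image l \<subseteq> metric_graph d"

definition visited :: "nat \<Rightarrow> loop \<Rightarrow> point set" where
  "visited d l = path_image l \<inter> lattice d"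

definition fundamental :: "nat \<Rightarrow> loop \<Rightarrow> bool" where
  "fundamental d l \<longleftrightarrow> (\<exists>a b. a \<noteq> b \<and> a \<in> visited d l \<and> b \<in> visited d l)"

definition ranges :: "loop set \<Rightarrow> point set" where
  "ranges L = (\<Union>l\<in>L. path_image l)"

definition floops :: "nat \<Rightarrow> loop set \<Rightarrow> point set \<Rightarrow> loop set" where
  "floops d L A = {l \<in> L. fundamental d l \<and> visited d l = A}"

definition gammaF :: "nat \<Rightarrow> loop set \<Rightarrow> point set \<Rightarrow> point set" where
  "gammaF d L A = ranges (floops d L A)"

definition conn :: "point set \<Rightarrow> point set \<Rightarrow> point set \<Rightarrow> bool" where
  "conn S A B \<longleftrightarrow> A \<inter> B \<noteq> {} \<or>
     (\<exists>g. path g \<and> path_image g \<subseteq> S \<and> pathstart g \<in> A \<and> pathfinish g \<in> B)"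

definition cluster :: "nat \<Rightarrow> point set \<Rightarrow> point \<Rightarrow> point set" where
  "cluster d S x = {v \<in> metric_graph d. conn S {v} {x}}"

text \<open>x_i^{+} = x + (i,0,...,0), x_i^{-} = x - (i,0,...,0)  (use a negative i for minus).\<close>
definition shift :: "point \<Rightarrow> int \<Rightarrow> point" where
  "shift x i = x(0 := x 0 + real_of_int i)"

definition AJ :: "point \<Rightarrow> nat \<Rightarrow> point set" where
  "AJ x J = {x} \<union> {shift x (int i) | i. 1 \<le> i \<and> i \<le> J} \<union> {shift x (- int i) | i. 1 \<le> i \<and> i \<le> J}"

definition Eev :: "nat \<Rightarrow> point set \<Rightarrow> point set \<Rightarrow> point \<Rightarrow> point \<Rightarrow> point \<Rightarrow> bool" where
  "Eev d S G x y z \<longleftrightarrow>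
     conn S {origin} {x} \<and> \<not> conn S {origin} G \<and>
     conn S {y} G \<and> conn S {z} G \<and>
     cluster d S x \<inter> cluster d S y = {} \<and>
     cluster d S x \<inter> cluster d S z = {} \<and>
     cluster d S y \<inter> cluster d S z = {}"

definition Omega :: "nat \<Rightarrow> (loop set \<times> point set) set" where
  "Omega d = {(L, G). (\<forall>l\<in>L. is_loop d l) \<and> G \<subseteq> lattice d}"

definition Fev :: "nat \<Rightarrow> nat \<Rightarrow> point \<Rightarrow> (loop set \<times> point set) set" where
  "Fev d J x = {(L, G) \<in> Omega d.
      gammaF d L (AJ x J) \<noteq> {} \<and>
      Eev d (ranges (L - floops d L (AJ x J))) G x (shift x (- int J)) (shift x (int J))}"

end

theory Submission
  imports Defs
begin

text \<open>Suppose both events occur for the same configuration, and let M and N be the loop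
  configurations with the loops of gamma^f_{A_J^{y1}}, resp. gamma^f_{A_J^{y2}}, deleted.
  As A_J^{y1} and A_J^{y2} differ, each deleted family survives the other deletion, and
  every loop of M missing from N passes through y2; so a connection in M either persists
  in N or runs through y2. The clusters of y1 - J and y1 + J in M are disjoint and both
  reach the ghost set, so they cannot both run through y2, and one of them reaches the
  ghost set in N; a surviving loop of gamma^f_{A_J^{y1}} links it to y1, so y1 reaches the
  ghost set in N, and symmetrically y2 reaches it in M. Finally the connection of the
  origin to y1 in M either persists in N or runs through y2, connecting the origin to the
  ghost set in N or in M, which both events forbid.\<close>

lemma conn_refl: "conn S {p} {p}"
  by (auto simp: conn_def)

lemma conn_sym:
  assumes "conn S {p} {q}"
  shows "conn S {q} {p}"
proof (cases "p = q")
  case False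
  then obtain g where "path g" "path_image g \<subseteq> S" "pathstart g = p" "pathfinish g = q"
    using assms by (auto simp: conn_def)
  then show ?thesis
    unfolding conn_def by (intro disjI2 exI[of _ "reversepath g"]) auto
qed (auto simp: conn_def)

lemma conn_singleton_iff: "conn S {p} Q \<longleftrightarrow> (\<exists>q\<in>Q. conn S {p} {q})"
  by (auto simp: conn_def)

lemma conn_trans:
  assumes pq: "conn S {p} {q}" and qQ: "conn S {q} Q"
  shows "conn S {p} Q"
proof -
  obtain r where "r \<in> Q" and qr: "conn S {q} {r}"
    using qQ conn_singleton_iff by blast
  have "conn S {p} {r}"
  proof (cases "p = q \<or> q = r")
    case False
    then obtain g h where "path g" "path_image g \<subseteq> S" "pathstart g = p" "pathfinish g = q"
      and "path h" "path_image h \<subseteq> S" "pathstart h = q" "pathfinish h = r"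
      using pq qr by (auto simp: conn_def)
    then show ?thesis
      unfolding conn_def by (intro disjI2 exI[of _ "g +++ h"]) (auto simp: path_image_join)
  qed (use pq qr in auto)
  with \<open>r \<in> Q\<close> show ?thesis
    using conn_singleton_iff by blast
qed

lemma conn_path_image:
  assumes "path g" "path_image g \<subseteq> S" "a \<in> path_image g" "b \<in> path_image g"
  shows "conn S {a} {b}"
proof -
  obtain h where "path h" "path_image h \<subseteq> path_image g" "pathstart h = a" "pathfinish h = b"
    using path_connected_path_image[OF assms(1)] assms(3,4) unfolding path_connected_def by blast
  with assms(2) show ?thesis
    unfolding conn_def by blast
qed

lemma conn_ranges_cases:
  assumes pQ: "conn (ranges M) {p} Q"
    and through: "\<And>l. l \<in> M - N \<Longrightarrow> path l \<and> y \<in> path_image l"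
  shows "conn (ranges N) {p} Q \<or> (conn (ranges M) {p} {y} \<and> conn (ranges M) {y} Q)"
proof -
  obtain q where "q \<in> Q" and pq: "conn (ranges M) {p} {q}"
    using pQ conn_singleton_iff by blast
  show ?thesis
  proof (cases "p = q")
    case True
    with \<open>q \<in> Q\<close> show ?thesis
      by (auto simp: conn_def)
  next
    case False
    then obtain g where g: "path g" "path_image g \<subseteq> ranges M" "pathstart g = p" "pathfinish g = q"
      using pq by (auto simp: conn_def)
    show ?thesis
    proof (cases "path_image g \<subseteq> ranges N")
      case True
      with g \<open>q \<in> Q\<close> show ?thesis
        unfolding conn_def by blast
    next
      case False
      then obtain r l where r: "r \<in> path_image g" "r \<in> path_image l" and "l \<in> M - N"
        using g(2) unfolding ranges_def by blast
      then have "path l" "path_image l \<subseteq> ranges M" "y \<in> path_image l"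
        using through by (auto simp: ranges_def)
      then have ry: "conn (ranges M) {r} {y}"
        using conn_path_image r(2) by blast
      have pr: "conn (ranges M) {p} {r}" and rq: "conn (ranges M) {r} {q}"
        using conn_path_image[OF g(1,2)] r(1) g(3,4)
        by (metis pathstart_in_path_image pathfinish_in_path_image)+
      have "conn (ranges M) {p} {y}" "conn (ranges M) {y} {q}"
        using conn_trans[OF pr ry] conn_trans[OF conn_sym[OF ry] rq] .
      with \<open>q \<in> Q\<close> show ?thesis
        using conn_singleton_iff by blast
    qed
  qed
qed

lemma path_through_floops_removed:
  assumes "\<forall>l\<in>L. is_loop d l" "l \<in> (L - floops d L A) - (L - floops d L B)" "b \<in> B"
  shows "path l \<and> b \<in> path_image l"
  using assms by (auto simp: floops_def is_loop_def visited_def)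

lemma conn_in_surviving_floop:
  assumes "\<forall>l\<in>L. is_loop d l" "gammaF d L A \<noteq> {}" "A \<noteq> B" "a \<in> A" "a' \<in> A"
  shows "conn (ranges (L - floops d L B)) {a} {a'}"
proof -
  obtain l where l: "l \<in> floops d L A"
    using assms(2) by (auto simp: gammaF_def ranges_def)
  with assms(3) have "l \<in> L - floops d L B"
    by (auto simp: floops_def)
  then have "path_image l \<subseteq> ranges (L - floops d L B)"
    by (auto simp: ranges_def)
  moreover have "path l" "A \<subseteq> path_image l"
    using l assms(1) by (auto simp: floops_def is_loop_def visited_def)
  ultimately show ?thesis
    using conn_path_image assms(4,5) by blast
qed

lemma not_conn_if_clusters_disjoint:
  "x \<in> metric_graph d \<Longrightarrow> cluster d S x \<inter> cluster d S y = {} \<Longrightarrow> \<not> conn S {x} {y}"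
  using conn_refl by (auto simp: cluster_def)

lemma lattice_subset_metric_graph: "lattice d \<subseteq> metric_graph d"
proof
  fix v
  assume "v \<in> lattice d"
  then have "{i. i < d \<and> v i \<notin> \<int>} = {}" "\<forall>i\<ge>d. v i = 0"
    by (auto simp: lattice_def)
  then show "v \<in> metric_graph d"
    by (simp only: metric_graph_def mem_Collect_eq card.empty) simp
qed

lemma shift_in_lattice: "y \<in> lattice d \<Longrightarrow> 0 < d \<Longrightarrow> shift y k \<in> lattice d"
  by (auto simp: lattice_def shift_def)

lemma AJ_members:
  "J \<ge> 1 \<Longrightarrow> y \<in> AJ y J \<and> shift y (- int J) \<in> AJ y J \<and> shift y (int J) \<in> AJ y J"
  unfolding AJ_def by blast

lemma AJ_coordinates:
  assumes "z \<in> AJ y J"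
  shows "\<forall>i\<noteq>0. z i = y i" and "y 0 - J \<le> z 0"
  using assms by (auto simp: AJ_def shift_def)

lemma AJ_inject:
  assumes "J \<ge> 1" "AJ y1 J = AJ y2 J"
  shows "y1 = y2"
proof -
  have le: "x2 0 \<le> x1 0" if "AJ x1 J = AJ x2 J" for x1 x2 :: point
  proof -
    have "shift x1 (- int J) \<in> AJ x2 J"
      using AJ_members[OF assms(1)] that by blast
    then show ?thesis
      using AJ_coordinates(2) by (fastforce simp: shift_def)
  qed
  have "y1 \<in> AJ y2 J"
    using AJ_members[OF assms(1)] assms(2) by blast
  then show ?thesis
    using AJ_coordinates(1) le[OF assms(2)] le[OF assms(2)[symmetric]]
    by (metis antisym ext)
qed

lemma Fev_conn_ghosts_after_other_removal:
  assumes F: "(L, G) \<in> Fev d J y1"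
    and "y1 \<in> lattice d" "0 < d" "J \<ge> 1" "y1 \<noteq> y2"
  shows "conn (ranges (L - floops d L (AJ y2 J))) {y1} G"
proof -
  define M where "M = L - floops d L (AJ y1 J)"
  define N where "N = L - floops d L (AJ y2 J)"
  define a where "a = shift y1 (- int J)"
  define b where "b = shift y1 (int J)"
  have loops: "\<forall>l\<in>L. is_loop d l"
    using F by (simp add: Fev_def Omega_def)
  have E: "Eev d (ranges M) G y1 a b" and "gammaF d L (AJ y1 J) \<noteq> {}"
    using F by (simp_all add: Fev_def M_def a_def b_def)
  moreover have "AJ y1 J \<noteq> AJ y2 J"
    using AJ_inject assms(4,5) by blast
  ultimately have y1_a: "conn (ranges N) {y1} {a}" and y1_b: "conn (ranges N) {y1} {b}"
    using conn_in_surviving_floop[OF loops] AJ_members[OF \<open>J \<ge> 1\<close>]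
    unfolding N_def a_def b_def by blast+
  have through_y2: "path l \<and> y2 \<in> path_image l" if "l \<in> M - N" for l
    using path_through_floops_removed[OF loops] that AJ_members[OF \<open>J \<ge> 1\<close>]
    unfolding M_def N_def by blast
  have "a \<in> metric_graph d"
    using shift_in_lattice assms(2,3) lattice_subset_metric_graph unfolding a_def by blast
  then have "\<not> conn (ranges M) {a} {b}"
    using E not_conn_if_clusters_disjoint unfolding Eev_def by blast
  then have "\<not> (conn (ranges M) {a} {y2} \<and> conn (ranges M) {b} {y2})"
    using conn_trans[OF _ conn_sym] by blast
  moreover have "conn (ranges M) {a} G" "conn (ranges M) {b} G"
    using E by (simp_all add: Eev_def)
  then have "conn (ranges N) {a} G \<or> conn (ranges M) {a} {y2}"
    and "conn (ranges N) {b} G \<or> conn (ranges M) {b} {y2}"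
    using conn_ranges_cases[OF _ through_y2] by blast+
  ultimately have "conn (ranges N) {a} G \<or> conn (ranges N) {b} G"
    by blast
  then show ?thesis
    using conn_trans[OF y1_a] conn_trans[OF y1_b] unfolding N_def by blast
qed

theorem lemma9p3:
  fixes d J :: nat and y1 y2 :: point
  assumes "d \<ge> 3" and "J \<ge> 1"
    and "y1 \<in> lattice d" and "y2 \<in> lattice d" and "y1 \<noteq> y2"
  shows "Fev d J y1 \<inter> Fev d J y2 = {}"
proof (rule ccontr)
  assume "Fev d J y1 \<inter> Fev d J y2 \<noteq> {}"
  then obtain L G where F1: "(L, G) \<in> Fev d J y1" and F2: "(L, G) \<in> Fev d J y2"
    by auto
  define M where "M = L - floops d L (AJ y1 J)"
  define N where "N = L - floops d L (AJ y2 J)"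
  have "0 < d"
    using assms(1) by simp
  have y1_G: "conn (ranges N) {y1} G" and y2_G: "conn (ranges M) {y2} G"
    using Fev_conn_ghosts_after_other_removal[OF F1 assms(3) \<open>0 < d\<close> assms(2,5)]
      Fev_conn_ghosts_after_other_removal[OF F2 assms(4) \<open>0 < d\<close> assms(2)] assms(5)
    unfolding M_def N_def by auto
  have "\<forall>l\<in>L. is_loop d l"
    using F1 by (simp add: Fev_def Omega_def)
  then have through_y2: "path l \<and> y2 \<in> path_image l" if "l \<in> M - N" for l
    using path_through_floops_removed that AJ_members[OF assms(2)]
    unfolding M_def N_def by blast
  have "conn (ranges M) {origin} {y1}"
    and no_ghost: "\<not> conn (ranges M) {origin} G" "\<not> conn (ranges N) {origin} G"
    using F1 F2 by (simp_all add: Fev_def Eev_def M_def N_def)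
  then have "conn (ranges N) {origin} {y1} \<or> conn (ranges M) {origin} {y2}"
    using conn_ranges_cases[OF _ through_y2] by blast
  then show False
    using conn_trans[OF _ y1_G] conn_trans[OF _ y2_G] no_ghost by blast
qed

end
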